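(* Let $a=(a_1,\dots,a_d)\in\mathcal{UN}_d$ and let $A_a=(a_{ij})$ be a real symmetric matrix associated to $a$. Then there exists $\beta\in\mathbb{R}$ such that $a_{ij}^2=\beta^2$ for all $i\neq j$.
   Context: A polynomial in $\mathbb{R}[z]$ is hyperbolic if all its roots are real. A sequence $a\in\mathbb{R}^d$ is a Nuij sequence if for every hyperbolic $p\in\mathbb{R}[z]$ of degree $d$, $p_a(z,s):=p(z)+\sum_{k=1}^d a_k s^k p^{(k)}(z)$ is hyperbolic for all $s\in\mathbb{R}$. A Nuij sequence $a$ admits a universal determinantal representation if there exists a real symmetric $d\times d$ matrix $A_a$ such that for every monic hyperbolic polynomial $p(z)=(z+\lambda_1)\cdots(z+\lambda_d)$ of degree $d$ one has $p_a(z,s)=\det(zI+D+sA_a)$, where $D$ is the diagonal matrix with diagonal entries $\lambda_1,\dots,\lambda_d$ in an arbitrary order; such $A_a$ is called a matrix associated to $a$. $\mathcal{UN}_d$ is the set of Nuij sequences in $\mathbb{R}^d$ admitting a universal determinantal representation. *)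

theory Defs
  imports "HOL-Analysis.Analysis" "HOL-Computational_Algebra.Polynomial"
begin

definition hyperbolic :: "real poly \<Rightarrow> bool" where
  "hyperbolic p \<longleftrightarrow> (\<forall>z::complex. poly (map_poly complex_of_real p) z = 0 \<longrightarrow> Im z = 0)"

definition nuij_poly :: "nat \<Rightarrow> (nat \<Rightarrow> real) \<Rightarrow> real poly \<Rightarrow> real \<Rightarrow> real poly" where
  "nuij_poly d a p s = p + (\<Sum>k\<in>{1..d}. smult (a k * s ^ k) ((pderiv ^^ k) p))"

definition nuij_seq :: "nat \<Rightarrow> (nat \<Rightarrow> real) \<Rightarrow> bool" where
  "nuij_seq d a \<longleftrightarrow>
     (\<forall>p. hyperbolic p \<and> degree p = d \<longrightarrow> (\<forall>s. hyperbolic (nuij_poly d a p s)))"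

definition diag_mat :: "('n::finite \<Rightarrow> real) \<Rightarrow> real^'n^'n" where
  "diag_mat l = (\<chi> i j. if i = j then l i else 0)"

text \<open>A is a matrix associated to a (d = CARD('n)): real symmetric and for every monic
  hyperbolic p = prod_i (z + l_i) of degree d (any ordering of the l_i, since l ranges over all
  functions on the index type) one has p_a(z,s) = det(zI + D + sA).\<close>
definition associated_matrix :: "(nat \<Rightarrow> real) \<Rightarrow> real^'n::finite^'n \<Rightarrow> bool" where
  "associated_matrix a A \<longleftrightarrow> transpose A = A \<and>
     (\<forall>l::'n \<Rightarrow> real. \<forall>z s.
        poly (nuij_poly CARD('n) a (\<Prod>i\<in>UNIV. [:l i, 1:]) s) z
          = det (z *\<^sub>R mat 1 + diag_mat l + s *\<^sub>R A))"

definition UN_d :: "'n::finite itself \<Rightarrow> (nat \<Rightarrow> real) set" where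
  "UN_d (t::'n itself) = {a. nuij_seq CARD('n) a \<and> (\<exists>A::real^'n^'n. associated_matrix a A)}"

end

theory Submission
  imports Defs "HOL-Combinatorics.Permutations"
begin

text \<open>The left-hand side of the defining identity of an associated matrix depends on the
  diagonal entries l only through the polynomial \<open>\<Prod>(z + l i)\<close>, so \<open>det (diag l + s A)\<close>
  depends only on the multiset of the l i. Choosing l to vanish exactly on an index set S and
  to equal 1 elsewhere, the coefficient of \<open>s ^ card S\<close> in \<open>det (diag l + s A)\<close> is the principal
  minor of A on S. Hence all principal minors of A of a given size agree: the 1 \<times> 1 minors
  make the diagonal constant, and then the 2 \<times> 2 minors \<open>a\<^sub>i\<^sub>i a\<^sub>j\<^sub>j - a\<^sub>i\<^sub>j\<^sup>2\<close> make the
  \<open>a\<^sub>i\<^sub>j\<^sup>2\<close> constant.\<close>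

definition det_pencil :: "'a::comm_ring_1^'n::finite^'n \<Rightarrow> 'a^'n^'n \<Rightarrow> 'a poly" where
  "det_pencil D A = (\<Sum>p | p permutes (UNIV::'n set).
     smult (of_int (sign p)) (\<Prod>k\<in>UNIV. [:D$k$(p k), A$k$(p k):]))"

definition principal_minor :: "'a::comm_ring_1^'n::finite^'n \<Rightarrow> 'n set \<Rightarrow> 'a" where
  "principal_minor A S = (\<Sum>p | p permutes S. of_int (sign p) * (\<Prod>k\<in>S. A$k$(p k)))"

lemma poly_det_pencil: "poly (det_pencil D A) s = det (D + s *\<^sub>R A)"
  unfolding det_pencil_def det_def by (simp add: poly_sum poly_prod algebra_simps)

lemma prod_linear_const_zero:
  fixes c b :: "'i \<Rightarrow> 'a::comm_ring_1"
  assumes "finite S" "\<forall>k\<in>S. c k = 0"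
  shows "(\<Prod>k\<in>S. [:c k, b k:]) = monom (\<Prod>k\<in>S. b k) (card S)"
  using assms
proof (induction S rule: finite_induct)
  case empty
  then show ?case by (simp add: monom_0 one_pCons)
next
  case (insert x F)
  then have "[:c x, b x:] = monom (b x) 1" by (simp add: monom_Suc monom_0)
  with insert show ?case by (simp add: mult_monom)
qed

lemma coeff_prod_linear:
  fixes c b :: "'i \<Rightarrow> 'a::comm_ring_1"
  assumes "finite I" "S \<subseteq> I" "\<forall>k\<in>S. c k = 0" "m \<le> card S"
  shows "coeff (\<Prod>k\<in>I. [:c k, b k:]) m =
     (if m < card S then 0 else (\<Prod>k\<in>S. b k) * (\<Prod>k\<in>I - S. c k))"
proof -
  have fin: "finite S" using assms(1,2) finite_subset by blast
  have "(\<Prod>k\<in>I. [:c k, b k:]) = (\<Prod>k\<in>I - S. [:c k, b k:]) * (\<Prod>k\<in>S. [:c k, b k:])"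
    using prod.subset_diff[OF assms(2,1)] .
  also have "\<dots> = monom (\<Prod>k\<in>S. b k) (card S) * (\<Prod>k\<in>I - S. [:c k, b k:])"
    using fin assms(3) by (simp add: prod_linear_const_zero mult.commute)
  finally have split: "(\<Prod>k\<in>I. [:c k, b k:]) = \<dots>" .
  have "coeff (\<Prod>k\<in>I - S. [:c k, b k:]) 0 = (\<Prod>k\<in>I - S. c k)"
    by (simp add: poly_0_coeff_0[symmetric] poly_prod)
  with assms(4) show ?thesis by (simp add: split coeff_monom_mult)
qed

lemma coeff_det_pencil_diag_indicator:
  fixes A :: "real^'n::finite^'n"
  shows "coeff (det_pencil (diag_mat (\<lambda>k. if k \<in> S then 0 else 1)) A) (card S)
       = principal_minor A S"
proof -
  let ?D = "diag_mat (\<lambda>k. if k \<in> S then 0 else 1) :: real^'n^'n"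
  let ?f = "\<lambda>p. of_int (sign p) * coeff (\<Prod>k\<in>UNIV. [:?D$k$(p k), A$k$(p k):]) (card S)"
  have diag: "?D$k$m = (if k = m \<and> k \<notin> S then 1 else 0)" for k m
    by (simp add: diag_mat_def)
  have outside: "?f p = 0" if "p permutes UNIV" "\<not> p permutes S" for p
  proof -
    from that obtain k where k: "k \<notin> S" "p k \<noteq> k"
      unfolding permutes_def by blast
    let ?T = "S \<union> {k. p k \<noteq> k}"
    have "card S < card ?T"
      using k by (intro psubset_card_mono) auto
    then show ?thesis
      by (subst coeff_prod_linear[where S="?T"]) (auto simp: diag)
  qed
  have inside: "?f p = of_int (sign p) * (\<Prod>k\<in>S. A$k$(p k))" if "p permutes S" for p
  proof -
    have fixed: "p k = k" if "k \<notin> S" for k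
      using \<open>p permutes S\<close> that by (rule permutes_not_in)
    then have "(\<Prod>k\<in>UNIV - S. ?D$k$(p k)) = 1"
      by (simp add: diag)
    moreover have "\<forall>k\<in>S. ?D$k$(p k) = 0"
      by (simp add: diag)
    ultimately show ?thesis
      by (subst coeff_prod_linear[where S=S]) auto
  qed
  have "coeff (det_pencil ?D A) (card S) = (\<Sum>p | p permutes UNIV. ?f p)"
    unfolding det_pencil_def by (simp add: coeff_sum)
  also have "\<dots> = (\<Sum>p | p permutes S. ?f p)"
    by (rule sum.mono_neutral_right) (simp_all add: outside subset_iff permutes_subset)
  also have "\<dots> = principal_minor A S"
    unfolding principal_minor_def by (rule sum.cong) (simp_all add: inside)
  finally show ?thesis .
qed

lemma principal_minor_singleton: "principal_minor A {i} = A$i$i"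
  by (simp add: principal_minor_def)

lemma principal_minor_doubleton:
  assumes "i \<noteq> j"
  shows "principal_minor A {i, j} = A$i$i * A$j$j - A$i$j * A$j$i"
proof -
  have "{p. p permutes {i, j}} = {id, Transposition.transpose i j}"
    by (auto simp: permutes_doubleton_iff)
  moreover have "Transposition.transpose i j \<noteq> id"
    using assms by (metis id_apply transpose_apply_first)
  ultimately show ?thesis
    using assms by (simp add: principal_minor_def sign_swap_id)
qed

lemma prod_linear_indicator:
  "(\<Prod>k\<in>(UNIV::'n::finite set). [:if k \<in> S then 0 else 1, 1:])
     = [:0, 1::real:] ^ card S * [:1, 1:] ^ (CARD('n) - card S)"
proof -
  have "(\<Prod>k\<in>(UNIV::'n set). [:if k \<in> S then 0 else 1, 1:])
      = (\<Prod>k\<in>UNIV - S. [:if k \<in> S then 0 else 1, 1:]) * (\<Prod>k\<in>S. [:if k \<in> S then 0 else 1, 1:])"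
    by (rule prod.subset_diff) auto
  also have "\<dots> = [:1, 1:] ^ card (UNIV - S) * [:0, 1::real:] ^ card S"
    by simp
  finally show ?thesis by (simp add: card_Diff_subset mult.commute)
qed

lemma associated_matrix_det_pencil_eq:
  fixes A :: "real^'n::finite^'n"
  assumes "associated_matrix a A"
    and "(\<Prod>k\<in>UNIV. [:l k, 1:]) = (\<Prod>k\<in>UNIV. [:l' k, 1:])"
  shows "det_pencil (diag_mat l) A = det_pencil (diag_mat l') A"
proof (rule poly_eq_poly_eq_iff[THEN iffD1], rule ext)
  fix s
  have "poly (det_pencil (diag_mat l) A) s = poly (nuij_poly CARD('n) a (\<Prod>k\<in>UNIV. [:l k, 1:]) s) 0"
    for l
    using assms(1) unfolding associated_matrix_def by (simp add: poly_det_pencil)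
  with assms(2) show "poly (det_pencil (diag_mat l) A) s = poly (det_pencil (diag_mat l') A) s"
    by metis
qed

lemma associated_matrix_principal_minor_eq:
  fixes A :: "real^'n::finite^'n"
  assumes "associated_matrix a A" "card S = card T"
  shows "principal_minor A S = principal_minor A T"
  using associated_matrix_det_pencil_eq[OF assms(1), of "\<lambda>k. if k \<in> S then 0 else 1"
      "\<lambda>k. if k \<in> T then 0 else 1"]
    coeff_det_pencil_diag_indicator[of S A] coeff_det_pencil_diag_indicator[of T A]
  by (simp add: prod_linear_indicator assms(2))

theorem lemma3p4:
  fixes a :: "nat \<Rightarrow> real" and A :: "real^'n::finite^'n"
  assumes "a \<in> UN_d TYPE('n)"
    and "associated_matrix a A"
  shows "\<exists>\<beta>::real. \<forall>i j. i \<noteq> j \<longrightarrow> (A $ i $ j)\<^sup>2 = \<beta>\<^sup>2"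
proof (cases "\<exists>i\<^sub>0 j\<^sub>0::'n. i\<^sub>0 \<noteq> j\<^sub>0")
  case False
  then show ?thesis by blast
next
  case True
  then obtain i\<^sub>0 j\<^sub>0 :: 'n where "i\<^sub>0 \<noteq> j\<^sub>0" by blast
  have sym: "A$i$j = A$j$i" for i j
    using assms(2) unfolding associated_matrix_def by (metis transpose_def vec_lambda_beta)
  have diag: "A$i$i = A$i\<^sub>0$i\<^sub>0" for i
    using associated_matrix_principal_minor_eq[OF assms(2), of "{i}" "{i\<^sub>0}"]
    by (simp add: principal_minor_singleton)
  have "(A$i$j)\<^sup>2 = (A$i\<^sub>0$j\<^sub>0)\<^sup>2" if "i \<noteq> j" for i j
    using associated_matrix_principal_minor_eq[OF assms(2), of "{i, j}" "{i\<^sub>0, j\<^sub>0}"]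
      \<open>i\<^sub>0 \<noteq> j\<^sub>0\<close> that diag[of i] diag[of j] diag[of j\<^sub>0] sym[of i j] sym[of i\<^sub>0 j\<^sub>0]
    by (simp add: principal_minor_doubleton power2_eq_square)
  then show ?thesis by blast
qed

end
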